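(* Let $\xi\in\mathbb{R}\setminus\{0\}$ and for $\psi\in H_0^2((-1,1))$ let $E_0(\psi)=\frac12\int_{-1}^1|B|^2\big(|\psi'|^2+\frac{|\psi''|^2}{\xi^2}\big)dx_2-\frac12g[\rho]\psi(0)^2$. Then: (i) if $|B|\ge|B|_c$, then $E_0(\psi)\ge0$ for every $\psi\in H_0^2((-1,1))$, and moreover $E_0(\psi)\ge\frac12\int_{-1}^1\big((|B|^2-|B|_c^2)|\psi'|^2+\frac{|B|^2|\psi''|^2}{\xi^2}\big)dx_2$; (ii) if $|B|<|B|_c$ and $|\xi|\le|\xi|^B_{vc}$, then $E_0(\psi)\ge0$ for every $\psi\in H_0^2((-1,1))$; (iii) if $|B|<|B|_c$ and $|\xi|>|\xi|^B_{vc}$, then there exists $\psi\in H_0^2((-1,1))$ with $E_0(\psi)<0$; (iv) if there is $\psi\in H_0^2((-1,1))$ with $E_0(\psi)<0$, then $|B|<|B|_c$, $|\xi|>|\xi|^B_{vc}$ and $\psi(0)\ne0$.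
   Context: $g>0$, $[\rho]>0$, $B\ne0$ constants. $|B|_c^2:=\sup\{g[\rho]\psi(0)^2/\int_{-1}^1|\psi'|^2dx_2: 0\ne\psi\in H_0^1((-1,1))\}$; for $|B|<|B|_c$, $(|\xi|^B_{vc})^2:=\inf\{|B|^2\int_{-1}^1|\psi''|^2dx_2/(g[\rho]\psi(0)^2-|B|^2\int_{-1}^1|\psi'|^2dx_2):\psi\in H_0^2((-1,1)),\ g[\rho]\psi(0)^2-|B|^2\int_{-1}^1|\psi'|^2dx_2>0\}$. *)

theory Defs
  imports "HOL-Analysis.Analysis"
begin

text \<open>One-dimensional Sobolev space H_0^1((-1,1)), via the (continuous) absolutely
continuous representative: \<open>h01 \<psi> d\<close> says that \<psi> (restricted to [-1,1]) lies in
H_0^1((-1,1)) with (weak) derivative \<open>d \<in> L^2((-1,1))\<close>, i.e.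
\<psi>(x) = \<integral>_{-1}^x d for x in [-1,1] (so \<psi>(-1) = 0) and \<psi>(1) = 0.\<close>
definition h01 :: "(real \<Rightarrow> real) \<Rightarrow> (real \<Rightarrow> real) \<Rightarrow> bool" where
  "h01 \<psi> d \<longleftrightarrow>
     set_integrable lborel {-1..1} d \<and>
     set_integrable lborel {-1..1} (\<lambda>x. (d x)\<^sup>2) \<and>
     (\<forall>x\<in>{-1..1}. \<psi> x = (LINT t:{-1..x}|lborel. d t)) \<and>
     \<psi> 1 = 0"

definition h02 :: "(real \<Rightarrow> real) \<Rightarrow> (real \<Rightarrow> real) \<Rightarrow> (real \<Rightarrow> real) \<Rightarrow> bool" where
  "h02 \<psi> d1 d2 \<longleftrightarrow> h01 \<psi> d1 \<and> h01 d1 d2"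

text \<open>A function is the zero element of the space iff it vanishes on [-1,1].\<close>
definition nonzero_on :: "(real \<Rightarrow> real) \<Rightarrow> bool" where
  "nonzero_on \<psi> \<longleftrightarrow> (\<exists>x\<in>{-1..1}. \<psi> x \<noteq> 0)"

text \<open>|B|_c (grav = g, rho = [\<rho>]).\<close>
definition Bc :: "real \<Rightarrow> real \<Rightarrow> real" where
  "Bc grav rho = sqrt (Sup {grav * rho * (\<psi> 0)\<^sup>2 / (LINT x:{-1..1}|lborel. (d x)\<^sup>2) | \<psi> d.
        h01 \<psi> d \<and> nonzero_on \<psi>})"

definition xi_vc :: "real \<Rightarrow> real \<Rightarrow> real \<Rightarrow> real" where
  "xi_vc grav rho Bn = sqrt (Inf
     {Bn\<^sup>2 * (LINT x:{-1..1}|lborel. (d2 x)\<^sup>2) /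
        (grav * rho * (\<psi> 0)\<^sup>2 - Bn\<^sup>2 * (LINT x:{-1..1}|lborel. (d1 x)\<^sup>2)) | \<psi> d1 d2.
        h02 \<psi> d1 d2 \<and> grav * rho * (\<psi> 0)\<^sup>2 - Bn\<^sup>2 * (LINT x:{-1..1}|lborel. (d1 x)\<^sup>2) > 0})"

text \<open>The energy E_0(\<psi>), with \<psi>' = d1 and \<psi>'' = d2.\<close>
definition E0 :: "real \<Rightarrow> real \<Rightarrow> real \<Rightarrow> real \<Rightarrow> (real \<Rightarrow> real) \<Rightarrow> (real \<Rightarrow> real) \<Rightarrow> (real \<Rightarrow> real) \<Rightarrow> real" where
  "E0 grav rho Bn \<xi> \<psi> d1 d2 =
     1/2 * (LINT x:{-1..1}|lborel. Bn\<^sup>2 * ((d1 x)\<^sup>2 + (d2 x)\<^sup>2 / \<xi>\<^sup>2))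
     - 1/2 * grav * rho * (\<psi> 0)\<^sup>2"

end

(*
  Write E_0(psi) = 1/2 [ (|B|^2 int psi'^2 - g[rho] psi(0)^2) + |B|^2 int psi''^2 / xi^2 ].
  Since psi(0) is the integral of psi' over (-1,0) and minus that over (0,1), Cauchy-Schwarz on
  the two halves gives 2 psi(0)^2 <= int psi'^2.  The tent 1 - |x| is extremal, and smoothing it
  (psi' = sinh(kx)/cosh k - tanh(kx), which tends to -sgn x and vanishes at +-1, as k -> oo)
  shows that 1/2 stays sharp within H_0^2.  Hence |B|_c^2 = g[rho]/2, so the first bracket is
  nonnegative for every psi iff |B| >= |B|_c.  Otherwise it is negative for some psi, and
  E_0 >= 0 for all psi says exactly xi^2 (g[rho] psi(0)^2 - |B|^2 int psi'^2) <= |B|^2 int psi''^2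
  for all psi, i.e. xi^2 <= the infimum defining (|xi|^B_vc)^2.
*)
theory Submission
  imports Defs
begin

lemma set_integral_nonneg:
  fixes f :: "'a \<Rightarrow> real"
  assumes "\<And>x. x \<in> A \<Longrightarrow> 0 \<le> f x"
  shows "0 \<le> (LINT x:A|M. f x)"
  unfolding set_lebesgue_integral_def
  by (rule Bochner_Integration.integral_nonneg) (simp add: assms indicator_def)

lemma set_integral_square_le:
  fixes f :: "'a \<Rightarrow> real"
  assumes A: "A \<in> sets M" "emeasure M A \<noteq> \<infinity>"
    and f: "set_integrable M A f" and f2: "set_integrable M A (\<lambda>x. (f x)\<^sup>2)"
  shows "(LINT x:A|M. f x)\<^sup>2 \<le> measure M A * (LINT x:A|M. (f x)\<^sup>2)"
proof (cases "measure M A = 0")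
  case True
  then have "A \<in> null_sets M"
    using A by (simp add: emeasure_eq_ennreal_measure null_sets_def)
  then have "AE x in M. indicator A x *\<^sub>R f x = 0"
    by (auto dest: AE_not_in)
  then show ?thesis
    by (simp add: set_lebesgue_integral_def integral_eq_zero_AE)
next
  case False
  define m where "m = measure M A"
  define c where "c = (LINT x:A|M. f x)"
  have m: "0 < m" using False by (simp add: m_def measure_nonneg order_le_neq_trans)
  have const: "set_integrable M A (\<lambda>x. (c / m)\<^sup>2)"
    using A by (simp add: set_integrable_def less_top[symmetric])
  have "0 \<le> (LINT x:A|M. (f x - c / m)\<^sup>2)"
    by (simp add: set_integral_nonneg)
  also have "\<dots> = (LINT x:A|M. (f x)\<^sup>2 - 2 * (c / m) * f x + (c / m)\<^sup>2)"
    by (simp add: power2_diff algebra_simps)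
  also have "\<dots> = (LINT x:A|M. (f x)\<^sup>2) - 2 * (c / m) * c + m * (c / m)\<^sup>2"
    using f f2 const A
    by (simp add: set_integral_add set_integral_diff set_integral_mult_right set_integral_const
        c_def m_def)
  also have "\<dots> = (LINT x:A|M. (f x)\<^sup>2) - c\<^sup>2 / m"
    using m by (simp add: power2_eq_square)
  finally show ?thesis
    using m by (simp add: c_def m_def divide_le_eq mult.commute)
qed

abbreviation L2sq :: "(real \<Rightarrow> real) \<Rightarrow> real" where
  "L2sq d \<equiv> LINT x:{-1..1}|lborel. (d x)\<^sup>2"

lemma L2sq_nonneg: "0 \<le> L2sq d"
  by (simp add: set_integral_nonneg)

lemma h01_sq_at_0_le:
  assumes "h01 \<psi> d"
  shows "2 * (\<psi> 0)\<^sup>2 \<le> L2sq d"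
proof -
  have d: "set_integrable lborel {-1..1} d" "set_integrable lborel {-1..1} (\<lambda>x. (d x)\<^sup>2)"
    and \<psi>: "\<And>x. x \<in> {-1..1} \<Longrightarrow> \<psi> x = (LINT t:{-1..x}|lborel. d t)" "\<psi> 1 = 0"
    using assms unfolding h01_def by auto
  have halves: "set_integrable lborel {-1..0} f" "set_integrable lborel {0<..1} f"
    if "set_integrable lborel {-1..1} f" for f :: "real \<Rightarrow> real"
    using that by (auto intro: set_integrable_subset)
  have split: "(LINT x:{-1..1}|lborel. f x) = (LINT x:{-1..0}|lborel. f x) + (LINT x:{0<..1}|lborel. f x)"
    if "set_integrable lborel {-1..1} f" for f :: "real \<Rightarrow> real"
  proof -
    have "{-1..1::real} = {-1..0} \<union> {0<..1}" "{-1..0::real} \<inter> {0<..1} = {}"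
      by auto
    then show ?thesis
      using halves[OF that] by (simp add: set_integral_Un)
  qed
  have left: "(LINT t:{-1..0}|lborel. d t) = \<psi> 0"
    using \<psi>(1)[of 0] by simp
  have right: "(LINT t:{0<..1}|lborel. d t) = - \<psi> 0"
    using split[OF d(1)] \<psi>(1)[of 1] \<psi>(2) left by simp
  have "(\<psi> 0)\<^sup>2 \<le> (LINT t:{-1..0}|lborel. (d t)\<^sup>2)"
    using set_integral_square_le[of "{-1..0}" lborel d] halves(1)[OF d(1)] halves(1)[OF d(2)] left
    by (simp add: emeasure_lborel_Icc_eq)
  moreover have "(\<psi> 0)\<^sup>2 \<le> (LINT t:{0<..1}|lborel. (d t)\<^sup>2)"
    using set_integral_square_le[of "{0<..1}" lborel d] halves(2)[OF d(1)] halves(2)[OF d(2)] right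
    by simp
  ultimately show ?thesis
    using split[OF d(2)] by simp
qed

lemma h01_if_has_derivative:
  assumes deriv: "\<And>x. x \<in> {-1..1} \<Longrightarrow> (\<psi> has_real_derivative d x) (at x within {-1..1})"
    and cont: "continuous_on {-1..1} d"
    and "\<psi> (-1) = 0" "\<psi> 1 = 0"
  shows "h01 \<psi> d"
  unfolding h01_def
proof (intro conjI ballI)
  show "set_integrable lborel {-1..1} d"
    using cont by (rule borel_integrable_atLeastAtMost')
  show "set_integrable lborel {-1..1} (\<lambda>x. (d x)\<^sup>2)"
    using cont by (intro borel_integrable_atLeastAtMost' continuous_intros)
  fix x :: real
  assume x: "x \<in> {-1..1}"
  have "(LINT t:{-1..x}|lborel. d t) = \<psi> x - \<psi> (-1)"
    unfolding set_lebesgue_integral_def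
  proof (rule integral_FTC_atLeastAtMost)
    show "(\<psi> has_vector_derivative d t) (at t within {-1..x})" if "-1 \<le> t" "t \<le> x" for t
      using deriv[of t] that x
      by (auto simp: has_real_derivative_iff_has_vector_derivative[symmetric] intro: DERIV_subset)
    show "continuous_on {-1..x} d"
      using cont x by (auto intro: continuous_on_subset)
  qed (use x in auto)
  then show "\<psi> x = (LINT t:{-1..x}|lborel. d t)"
    using assms(3) by simp
qed (fact assms(4))

definition smooth_tent :: "real \<Rightarrow> real \<Rightarrow> real" where
  "smooth_tent k x = (cosh (k * x) / cosh k - 1 + ln (cosh k) - ln (cosh (k * x))) / k"

definition smooth_tent_d1 :: "real \<Rightarrow> real \<Rightarrow> real" where
  "smooth_tent_d1 k x = sinh (k * x) / cosh k - tanh (k * x)"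

definition smooth_tent_d2 :: "real \<Rightarrow> real \<Rightarrow> real" where
  "smooth_tent_d2 k x = k * (cosh (k * x) / cosh k - 1 + (tanh (k * x))\<^sup>2)"

lemma smooth_tent_has_real_derivative:
  assumes "k \<noteq> 0"
  shows "(smooth_tent k has_real_derivative smooth_tent_d1 k x) (at x)"
proof -
  have "((\<lambda>x. (cosh (k * x) / cosh k - 1 + ln (cosh k) - ln (cosh (k * x))) / k)
      has_real_derivative (sinh (k * x) * k / cosh k - sinh (k * x) * k / cosh (k * x)) / k) (at x)"
    using assms by (auto intro!: derivative_eq_intros)
  moreover have "(sinh (k * x) * k / cosh k - sinh (k * x) * k / cosh (k * x)) / k = smooth_tent_d1 k x"
    using assms by (simp add: smooth_tent_d1_def tanh_def field_simps)
  ultimately show ?thesis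
    by (simp add: smooth_tent_def[abs_def])
qed

lemma smooth_tent_d1_has_real_derivative:
  "(smooth_tent_d1 k has_real_derivative smooth_tent_d2 k x) (at x)"
  unfolding smooth_tent_d1_def[abs_def] smooth_tent_d2_def
  by (auto intro!: derivative_eq_intros simp: algebra_simps)

lemma continuous_on_smooth_tent_d1: "continuous_on A (smooth_tent_d1 k)"
  unfolding smooth_tent_d1_def by (intro continuous_intros) auto

lemma continuous_on_smooth_tent_d2: "continuous_on A (smooth_tent_d2 k)"
  unfolding smooth_tent_d2_def by (intro continuous_intros) auto

lemma h02_smooth_tent:
  assumes "k \<noteq> 0"
  shows "h02 (smooth_tent k) (smooth_tent_d1 k) (smooth_tent_d2 k)"
  unfolding h02_def
proof
  show "h01 (smooth_tent k) (smooth_tent_d1 k)"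
    by (rule h01_if_has_derivative[OF
          has_field_derivative_at_within[OF smooth_tent_has_real_derivative[OF assms]]
          continuous_on_smooth_tent_d1]) (simp_all add: smooth_tent_def)
  show "h01 (smooth_tent_d1 k) (smooth_tent_d2 k)"
    by (rule h01_if_has_derivative[OF
          has_field_derivative_at_within[OF smooth_tent_d1_has_real_derivative]
          continuous_on_smooth_tent_d2]) (simp_all add: smooth_tent_d1_def tanh_def)
qed

lemma abs_smooth_tent_d1_le_1:
  assumes "\<bar>x\<bar> \<le> 1"
  shows "\<bar>smooth_tent_d1 k x\<bar> \<le> 1"
proof -
  have "cosh (k * x) \<le> cosh k"
    using assms by (metis abs_mult cosh_real_abs cosh_real_nonneg_le_iff abs_ge_zero
        mult_left_le mult_le_one)
  then have "\<bar>cosh (k * x) / cosh k - 1\<bar> \<le> 1"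
    by (simp add: abs_le_iff divide_le_eq_1)
  moreover have "\<bar>tanh (k * x)\<bar> \<le> 1"
    using tanh_real_bounds[of "k * x"] by auto
  moreover have "smooth_tent_d1 k x = tanh (k * x) * (cosh (k * x) / cosh k - 1)"
    by (simp add: smooth_tent_d1_def tanh_def field_simps)
  ultimately show ?thesis
    by (simp add: abs_mult mult_le_one)
qed

lemma smooth_tent_at_0_ge:
  assumes "k > 0"
  shows "1 - 2 / k \<le> smooth_tent k 0"
proof -
  have "exp k / 2 \<le> cosh k"
    by (simp add: cosh_def)
  then have "k - ln 2 \<le> ln (cosh k)"
    using ln_le_cancel_iff[of "exp k / 2" "cosh k"] by (simp add: ln_div)
  moreover have "ln 2 \<le> (1::real)"
    using ln_le_minus_one[of 2] by simp
  moreover have "0 < 1 / cosh k"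
    by simp
  ultimately have "k - 2 \<le> 1 / cosh k - 1 + ln (cosh k)"
    by linarith
  then have "(k - 2) / k \<le> (1 / cosh k - 1 + ln (cosh k)) / k"
    using assms by (intro divide_right_mono) auto
  then show ?thesis
    using assms by (simp add: smooth_tent_def diff_divide_distrib)
qed

lemma L2sq_smooth_tent_d1_le: "L2sq (smooth_tent_d1 k) \<le> 2"
proof -
  have "L2sq (smooth_tent_d1 k) \<le> (LINT x:{-1..1::real}|lborel. 1)"
  proof (rule set_integral_mono[where f = "\<lambda>x. (smooth_tent_d1 k x)\<^sup>2"])
    show "set_integrable lborel {-1..1} (\<lambda>x. (smooth_tent_d1 k x)\<^sup>2)"
      by (intro borel_integrable_atLeastAtMost' continuous_intros continuous_on_smooth_tent_d1)
    show "(smooth_tent_d1 k x)\<^sup>2 \<le> 1" if "x \<in> {-1..1}" for x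
      using abs_smooth_tent_d1_le_1[of x k] that by (simp add: abs_square_le_1 abs_le_iff)
  qed (simp add: borel_integrable_atLeastAtMost')
  then show ?thesis
    by (simp add: set_integral_const emeasure_lborel_Icc_eq)
qed

lemma exists_h02_ratio_gt:
  assumes "q < 1 / 2"
  shows "\<exists>\<psi> d1 d2. h02 \<psi> d1 d2 \<and> \<psi> 0 \<noteq> 0 \<and> q * L2sq d1 < (\<psi> 0)\<^sup>2"
proof -
  define s where "s = sqrt (2 * max q 0)"
  have s: "0 \<le> s" "s < 1"
    using assms by (auto simp: s_def real_sqrt_lt_1_iff)
  define k where "k = 2 / (1 - s) + 1"
  have k: "k > 0"
    using s by (simp add: k_def add_pos_nonneg)
  have "k * (1 - s) = 2 + (1 - s)"
    using s(2) by (simp add: k_def field_simps)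
  then have "2 / k < 1 - s"
    using k s by (simp add: divide_less_eq mult.commute)
  then have smooth_tent_0: "s < smooth_tent k 0"
    using smooth_tent_at_0_ge[OF k] by linarith
  have "q * L2sq (smooth_tent_d1 k) \<le> max q 0 * L2sq (smooth_tent_d1 k)"
    using L2sq_nonneg by (intro mult_right_mono) auto
  also have "\<dots> \<le> max q 0 * 2"
    using L2sq_smooth_tent_d1_le by (intro mult_left_mono) auto
  also have "\<dots> = s\<^sup>2"
    by (simp add: s_def)
  also have "\<dots> < (smooth_tent k 0)\<^sup>2"
    using smooth_tent_0 s by (intro power_strict_mono) auto
  finally have "q * L2sq (smooth_tent_d1 k) < (smooth_tent k 0)\<^sup>2" .
  moreover have "smooth_tent k 0 \<noteq> 0"
    using smooth_tent_0 s by linarith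
  ultimately show ?thesis
    using h02_smooth_tent[of k] k by auto
qed

lemma Bc_eq:
  assumes g: "0 < grav * rho"
  shows "Bc grav rho = sqrt (grav * rho / 2)"
proof -
  let ?T = "{grav * rho * (\<psi> 0)\<^sup>2 / L2sq d | \<psi> d. h01 \<psi> d \<and> nonzero_on \<psi>}"
  have "Sup ?T = grav * rho / 2"
  proof (rule cSup_eq_non_empty)
    obtain \<psi> d1 d2 where "h02 \<psi> d1 d2" "\<psi> 0 \<noteq> 0"
      using exists_h02_ratio_gt[of 0] by auto
    then show "?T \<noteq> {}"
      unfolding h02_def nonzero_on_def by force
  next
    fix t assume "t \<in> ?T"
    then obtain \<psi> d where t: "t = grav * rho * (\<psi> 0)\<^sup>2 / L2sq d" and "h01 \<psi> d"
      by auto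
    then have "grav * rho * (\<psi> 0)\<^sup>2 \<le> grav * rho / 2 * L2sq d"
      using mult_left_mono[OF h01_sq_at_0_le, of \<psi> d "grav * rho / 2"] g by simp
    then show "t \<le> grav * rho / 2"
      using L2sq_nonneg[of d] g unfolding t
      by (cases "L2sq d = 0") (auto simp: divide_le_eq)
  next
    fix y assume upper: "\<And>t. t \<in> ?T \<Longrightarrow> t \<le> y"
    show "grav * rho / 2 \<le> y"
    proof (rule ccontr)
      assume "\<not> grav * rho / 2 \<le> y"
      then have "y / (grav * rho) < 1 / 2"
        using g by (simp add: divide_less_eq)
      then obtain \<psi> d1 d2 where h: "h02 \<psi> d1 d2" and "\<psi> 0 \<noteq> 0"
        and ratio: "y / (grav * rho) * L2sq d1 < (\<psi> 0)\<^sup>2"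
        using exists_h02_ratio_gt by blast
      then have pos: "0 < L2sq d1"
        using h01_sq_at_0_le[of \<psi> d1] unfolding h02_def
        by (smt (verit) zero_less_power2)
      have "y < grav * rho * (\<psi> 0)\<^sup>2 / L2sq d1"
        using ratio g pos by (simp add: field_simps)
      moreover have "grav * rho * (\<psi> 0)\<^sup>2 / L2sq d1 \<in> ?T"
        using h \<open>\<psi> 0 \<noteq> 0\<close> unfolding h02_def nonzero_on_def by force
      ultimately show False
        using upper by fastforce
    qed
  qed
  then show ?thesis
    by (simp add: Bc_def)
qed

lemma set_integral_h02_lincomb:
  assumes "h02 \<psi> d1 d2"
  shows "(LINT x:{-1..1}|lborel. a * (d1 x)\<^sup>2 + c * (d2 x)\<^sup>2) = a * L2sq d1 + c * L2sq d2"
proof -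
  have "set_integrable lborel {-1..1} (\<lambda>x. (d1 x)\<^sup>2)" "set_integrable lborel {-1..1} (\<lambda>x. (d2 x)\<^sup>2)"
    using assms unfolding h02_def h01_def by auto
  then show ?thesis
    by (simp add: set_integral_add set_integral_mult_right)
qed

lemma E0_eq:
  assumes "h02 \<psi> d1 d2"
  shows "E0 grav rho b \<xi> \<psi> d1 d2
    = (b\<^sup>2 * L2sq d1 + b\<^sup>2 * L2sq d2 / \<xi>\<^sup>2 - grav * rho * (\<psi> 0)\<^sup>2) / 2"
proof -
  have "(\<lambda>x. b\<^sup>2 * ((d1 x)\<^sup>2 + (d2 x)\<^sup>2 / \<xi>\<^sup>2)) = (\<lambda>x. b\<^sup>2 * (d1 x)\<^sup>2 + b\<^sup>2 / \<xi>\<^sup>2 * (d2 x)\<^sup>2)"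
    by (simp add: fun_eq_iff algebra_simps)
  then show ?thesis
    using set_integral_h02_lincomb[OF assms, of "b\<^sup>2" "b\<^sup>2 / \<xi>\<^sup>2"] by (simp add: E0_def)
qed

lemma E0_ge_Bc_bound:
  assumes g: "0 < grav * rho" and h: "h02 \<psi> d1 d2"
  shows "1/2 * (LINT x:{-1..1}|lborel. (b\<^sup>2 - (Bc grav rho)\<^sup>2) * (d1 x)\<^sup>2 + b\<^sup>2 * (d2 x)\<^sup>2 / \<xi>\<^sup>2)
    \<le> E0 grav rho b \<xi> \<psi> d1 d2"
proof -
  have "(\<lambda>x. (b\<^sup>2 - (Bc grav rho)\<^sup>2) * (d1 x)\<^sup>2 + b\<^sup>2 * (d2 x)\<^sup>2 / \<xi>\<^sup>2)
      = (\<lambda>x. (b\<^sup>2 - grav * rho / 2) * (d1 x)\<^sup>2 + b\<^sup>2 / \<xi>\<^sup>2 * (d2 x)\<^sup>2)"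
    using g by (simp add: Bc_eq fun_eq_iff)
  moreover have "grav * rho * (\<psi> 0)\<^sup>2 \<le> grav * rho / 2 * L2sq d1"
    using mult_left_mono[OF h01_sq_at_0_le, of \<psi> d1 "grav * rho / 2"] h g
    unfolding h02_def by simp
  ultimately show ?thesis
    using set_integral_h02_lincomb[OF h, of "b\<^sup>2 - grav * rho / 2" "b\<^sup>2 / \<xi>\<^sup>2"]
    by (simp add: E0_eq[OF h] algebra_simps)
qed

lemma less_Bc_iff_exists_h02:
  assumes g: "0 < grav * rho" and b: "0 \<le> b"
  shows "b < Bc grav rho \<longleftrightarrow> (\<exists>\<psi> d1 d2. h02 \<psi> d1 d2 \<and> b\<^sup>2 * L2sq d1 < grav * rho * (\<psi> 0)\<^sup>2)"
    (is "_ \<longleftrightarrow> ?unstable")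
proof -
  have "b = sqrt (b\<^sup>2)"
    using b by simp
  then have "b < Bc grav rho \<longleftrightarrow> b\<^sup>2 < grav * rho / 2"
    using g by (metis Bc_eq real_sqrt_less_iff)
  also have "\<dots> \<longleftrightarrow> b\<^sup>2 / (grav * rho) < 1 / 2"
    using g by (simp add: divide_less_eq)
  also have "\<dots> \<longleftrightarrow> ?unstable"
  proof
    assume "b\<^sup>2 / (grav * rho) < 1 / 2"
    then obtain \<psi> d1 d2 where "h02 \<psi> d1 d2" "b\<^sup>2 / (grav * rho) * L2sq d1 < (\<psi> 0)\<^sup>2"
      using exists_h02_ratio_gt by blast
    with g show ?unstable
      by (auto simp: field_simps)
  next
    assume ?unstable
    then obtain \<psi> d1 d2 where h: "h02 \<psi> d1 d2" and less: "b\<^sup>2 * L2sq d1 < grav * rho * (\<psi> 0)\<^sup>2"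
      by blast
    have "grav * rho * (\<psi> 0)\<^sup>2 \<le> grav * rho / 2 * L2sq d1"
      using mult_left_mono[OF h01_sq_at_0_le, of \<psi> d1 "grav * rho / 2"] h g
      unfolding h02_def by simp
    with less have "b\<^sup>2 * L2sq d1 < grav * rho / 2 * L2sq d1"
      by linarith
    then have "b\<^sup>2 < grav * rho / 2"
      using L2sq_nonneg[of d1] by (meson mult_right_mono not_less)
    then show "b\<^sup>2 / (grav * rho) < 1 / 2"
      using g by (simp add: divide_less_eq)
  qed
  finally show ?thesis .
qed

lemma abs_le_sqrt_Inf_iff:
  fixes S :: "real set"
  assumes "S \<noteq> {}" and "\<And>s. s \<in> S \<Longrightarrow> 0 \<le> s"
  shows "\<bar>x\<bar> \<le> sqrt (Inf S) \<longleftrightarrow> (\<forall>s\<in>S. x\<^sup>2 \<le> s)"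
proof -
  have "\<bar>x\<bar> \<le> sqrt (Inf S) \<longleftrightarrow> x\<^sup>2 \<le> Inf S"
    by (metis real_sqrt_abs real_sqrt_le_iff)
  also have "\<dots> \<longleftrightarrow> (\<forall>s\<in>S. x\<^sup>2 \<le> s)"
    using assms by (intro le_cInf_iff) (auto intro: bdd_belowI[of S 0])
  finally show ?thesis .
qed

lemma E0_nonneg_iff:
  assumes "h02 \<psi> d1 d2" and "\<xi> \<noteq> 0"
  shows "0 \<le> E0 grav rho b \<xi> \<psi> d1 d2
    \<longleftrightarrow> \<xi>\<^sup>2 * (grav * rho * (\<psi> 0)\<^sup>2 - b\<^sup>2 * L2sq d1) \<le> b\<^sup>2 * L2sq d2"
proof -
  have "0 \<le> E0 grav rho b \<xi> \<psi> d1 d2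
      \<longleftrightarrow> grav * rho * (\<psi> 0)\<^sup>2 - b\<^sup>2 * L2sq d1 \<le> b\<^sup>2 * L2sq d2 / \<xi>\<^sup>2"
    using assms(1) by (simp add: E0_eq) linarith
  also have "\<dots> \<longleftrightarrow> \<xi>\<^sup>2 * (grav * rho * (\<psi> 0)\<^sup>2 - b\<^sup>2 * L2sq d1) \<le> b\<^sup>2 * L2sq d2"
    using assms(2) by (simp add: le_divide_eq mult.commute)
  finally show ?thesis .
qed

lemma E0_nonneg_iff_abs_le_xi_vc:
  assumes "\<xi> \<noteq> 0"
    and "\<exists>\<psi> d1 d2. h02 \<psi> d1 d2 \<and> b\<^sup>2 * L2sq d1 < grav * rho * (\<psi> 0)\<^sup>2"
  shows "(\<forall>\<psi> d1 d2. h02 \<psi> d1 d2 \<longrightarrow> 0 \<le> E0 grav rho b \<xi> \<psi> d1 d2) \<longleftrightarrow> \<bar>\<xi>\<bar> \<le> xi_vc grav rho b"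
proof -
  define S where "S = {b\<^sup>2 * L2sq d2 / (grav * rho * (\<psi> 0)\<^sup>2 - b\<^sup>2 * L2sq d1) | \<psi> d1 d2.
    h02 \<psi> d1 d2 \<and> grav * rho * (\<psi> 0)\<^sup>2 - b\<^sup>2 * L2sq d1 > 0}"
  have "S \<noteq> {}"
    using assms(2) unfolding S_def by force
  moreover have "0 \<le> s" if "s \<in> S" for s
    using that L2sq_nonneg unfolding S_def by force
  ultimately have "\<bar>\<xi>\<bar> \<le> xi_vc grav rho b \<longleftrightarrow> (\<forall>s\<in>S. \<xi>\<^sup>2 \<le> s)"
    unfolding xi_vc_def S_def[symmetric] by (rule abs_le_sqrt_Inf_iff)
  also have "\<dots> \<longleftrightarrow> (\<forall>\<psi> d1 d2. h02 \<psi> d1 d2 \<longrightarrow> (0 < grav * rho * (\<psi> 0)\<^sup>2 - b\<^sup>2 * L2sq d1 \<longrightarrow>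
      \<xi>\<^sup>2 \<le> b\<^sup>2 * L2sq d2 / (grav * rho * (\<psi> 0)\<^sup>2 - b\<^sup>2 * L2sq d1)))"
    unfolding S_def by blast
  also have "\<dots> \<longleftrightarrow> (\<forall>\<psi> d1 d2. h02 \<psi> d1 d2 \<longrightarrow>
      \<xi>\<^sup>2 * (grav * rho * (\<psi> 0)\<^sup>2 - b\<^sup>2 * L2sq d1) \<le> b\<^sup>2 * L2sq d2)"
  proof -
    have "(0 < D \<longrightarrow> \<xi>\<^sup>2 \<le> b\<^sup>2 * L / D) \<longleftrightarrow> \<xi>\<^sup>2 * D \<le> b\<^sup>2 * L" if "0 \<le> L" for D L
    proof (cases "0 < D")
      case False
      then have "\<xi>\<^sup>2 * D \<le> 0 \<and> 0 \<le> b\<^sup>2 * L"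
        using that by (simp add: mult_nonneg_nonpos)
      with False show ?thesis
        by linarith
    qed (simp add: le_divide_eq)
    then show ?thesis
      by (simp only: L2sq_nonneg)
  qed
  also have "\<dots> \<longleftrightarrow> (\<forall>\<psi> d1 d2. h02 \<psi> d1 d2 \<longrightarrow> 0 \<le> E0 grav rho b \<xi> \<psi> d1 d2)"
    by (simp add: E0_nonneg_iff assms(1))
  finally show ?thesis ..
qed

lemma E0_negD:
  assumes "h02 \<psi> d1 d2" and "E0 grav rho b \<xi> \<psi> d1 d2 < 0"
  shows "b\<^sup>2 * L2sq d1 < grav * rho * (\<psi> 0)\<^sup>2" and "\<psi> 0 \<noteq> 0"
proof -
  have "0 \<le> b\<^sup>2 * L2sq d2 / \<xi>\<^sup>2"
    using L2sq_nonneg by simp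
  then show less: "b\<^sup>2 * L2sq d1 < grav * rho * (\<psi> 0)\<^sup>2"
    using assms by (simp add: E0_eq)
  have "0 \<le> b\<^sup>2 * L2sq d1"
    using L2sq_nonneg by simp
  with less show "\<psi> 0 \<noteq> 0"
    by auto
qed

lemma E0_nonneg_if_Bc_le:
  assumes g: "0 < grav * rho" and "Bc grav rho \<le> b" and h: "h02 \<psi> d1 d2"
  shows "0 \<le> E0 grav rho b \<xi> \<psi> d1 d2"
proof -
  have "0 \<le> Bc grav rho"
    using g by (simp add: Bc_eq)
  then have "(Bc grav rho)\<^sup>2 \<le> b\<^sup>2"
    by (rule power_mono[OF assms(2)])
  then have "0 \<le> (LINT x:{-1..1}|lborel. (b\<^sup>2 - (Bc grav rho)\<^sup>2) * (d1 x)\<^sup>2 + b\<^sup>2 * (d2 x)\<^sup>2 / \<xi>\<^sup>2)"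
    by (simp add: set_integral_nonneg)
  then show ?thesis
    using E0_ge_Bc_bound[OF g h, where b = b and \<xi> = \<xi>] by linarith
qed

theorem lemma3p3:
  fixes grav rho \<xi> :: real and B :: "'a::real_normed_vector"
  assumes "grav > 0" and "rho > 0" and "B \<noteq> 0" and "\<xi> \<noteq> 0"
  shows
    "(norm B \<ge> Bc grav rho \<longrightarrow>
        (\<forall>\<psi> d1 d2. h02 \<psi> d1 d2 \<longrightarrow>
           E0 grav rho (norm B) \<xi> \<psi> d1 d2 \<ge> 0 \<and>
           E0 grav rho (norm B) \<xi> \<psi> d1 d2 \<ge>
             1/2 * (LINT x:{-1..1}|lborel.
               ((norm B)\<^sup>2 - (Bc grav rho)\<^sup>2) * (d1 x)\<^sup>2 + (norm B)\<^sup>2 * (d2 x)\<^sup>2 / \<xi>\<^sup>2)))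
   \<and> (norm B < Bc grav rho \<and> \<bar>\<xi>\<bar> \<le> xi_vc grav rho (norm B) \<longrightarrow>
        (\<forall>\<psi> d1 d2. h02 \<psi> d1 d2 \<longrightarrow> E0 grav rho (norm B) \<xi> \<psi> d1 d2 \<ge> 0))
   \<and> (norm B < Bc grav rho \<and> \<bar>\<xi>\<bar> > xi_vc grav rho (norm B) \<longrightarrow>
        (\<exists>\<psi> d1 d2. h02 \<psi> d1 d2 \<and> E0 grav rho (norm B) \<xi> \<psi> d1 d2 < 0))
   \<and> (\<forall>\<psi> d1 d2. h02 \<psi> d1 d2 \<and> E0 grav rho (norm B) \<xi> \<psi> d1 d2 < 0 \<longrightarrow>
        norm B < Bc grav rho \<and> \<bar>\<xi>\<bar> > xi_vc grav rho (norm B) \<and> \<psi> 0 \<noteq> 0)"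
proof -
  have g: "0 < grav * rho"
    using assms(1,2) by simp
  let ?unstable = "\<exists>\<psi> d1 d2. h02 \<psi> d1 d2 \<and> (norm B)\<^sup>2 * L2sq d1 < grav * rho * (\<psi> 0)\<^sup>2"
  have unstable_iff: "norm B < Bc grav rho \<longleftrightarrow> ?unstable"
    by (rule less_Bc_iff_exists_h02[OF g norm_ge_zero])
  have stable_iff: "(\<forall>\<psi> d1 d2. h02 \<psi> d1 d2 \<longrightarrow> 0 \<le> E0 grav rho (norm B) \<xi> \<psi> d1 d2)
      \<longleftrightarrow> \<bar>\<xi>\<bar> \<le> xi_vc grav rho (norm B)" if ?unstable
    by (rule E0_nonneg_iff_abs_le_xi_vc[OF assms(4) that])
  show ?thesis
  proof (intro conjI impI allI, goal_cases)
    case (1 \<psi> d1 d2)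
    then show ?case by (rule E0_nonneg_if_Bc_le[OF g])
  next
    case (2 \<psi> d1 d2)
    then show ?case using E0_ge_Bc_bound[OF g] by blast
  next
    case (3 \<psi> d1 d2)
    then show ?case using unstable_iff stable_iff by blast
  next
    case 4
    then show ?case using unstable_iff stable_iff by (meson not_le)
  next
    case (5 \<psi> d1 d2)
    then show ?case using unstable_iff E0_negD(1) by blast
  next
    case (6 \<psi> d1 d2)
    then show ?case using unstable_iff stable_iff E0_negD(1) by (meson not_le)
  next
    case (7 \<psi> d1 d2)
    then show ?case using E0_negD(2) by blast
  qed
qed

end
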